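(* Let $p\in\{1,2\}$. For all $u\in\mathcal C^\infty_c(\mathbb R^2)$, $$\int_{\mathbb R^2}|x|^{2p}|\nabla^2u|^2\lesssim\int_{\mathbb R^2}|x|^{2p}|\Delta u|^2+\int_{\mathbb R^2}|x|^{2p-2}|\nabla u|^2.$$
   Context: $\nabla^2u$ denotes the Hessian of $u$, $|\nabla^2u|^2=\sum_{i,j}(\partial_{ij}u)^2$. *)

theory Defs
  imports "HOL-Analysis.Analysis"
begin

definition pderiv :: "'n::finite \<Rightarrow> (real^'n \<Rightarrow> real) \<Rightarrow> real^'n \<Rightarrow> real" where
  "pderiv i f = (\<lambda>x. frechet_derivative f (at x) (axis i 1))"

fun iter_pderiv :: "'n::finite list \<Rightarrow> (real^'n \<Rightarrow> real) \<Rightarrow> real^'n \<Rightarrow> real" where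
  "iter_pderiv [] f = f"
| "iter_pderiv (i # is) f = pderiv i (iter_pderiv is f)"

text \<open>C^infinity: every iterated partial derivative exists and is (Frechet) differentiable
  everywhere (hence all partial derivatives of all orders exist and are continuous).\<close>
definition smooth :: "(real^'n::finite \<Rightarrow> real) \<Rightarrow> bool" where
  "smooth f \<longleftrightarrow> (\<forall>is x. iter_pderiv is f differentiable (at x))"

definition compact_support :: "(real^'n::finite \<Rightarrow> real) \<Rightarrow> bool" where
  "compact_support f \<longleftrightarrow> compact (closure {x. f x \<noteq> 0})"

definition C_infty_c :: "(real^'n::finite \<Rightarrow> real) \<Rightarrow> bool" where
  "C_infty_c f \<longleftrightarrow> smooth f \<and> compact_support f"

definition grad_sq :: "(real^'n::finite \<Rightarrow> real) \<Rightarrow> real^'n \<Rightarrow> real" where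
  "grad_sq f x = (\<Sum>i\<in>UNIV. (pderiv i f x)^2)"

definition laplacian :: "(real^'n::finite \<Rightarrow> real) \<Rightarrow> real^'n \<Rightarrow> real" where
  "laplacian f x = (\<Sum>i\<in>UNIV. pderiv i (pderiv i f) x)"

definition hessian_sq :: "(real^'n::finite \<Rightarrow> real) \<Rightarrow> real^'n \<Rightarrow> real" where
  "hessian_sq f x = (\<Sum>i\<in>UNIV. \<Sum>j\<in>UNIV. (pderiv i (pderiv j f) x)^2)"

end

theory Submission
  imports Defs
begin

(*
  Write w(x) = |x|^(2p) with p >= 1, and u_i, u_ij
  for partial derivatives of a smooth compactly supported u.  The divergence
     D := d1(w u_2 u_12) - d2(w u_2 u_11)
        = w (u_12^2 - u_11 u_22) + 2p |x|^(2p-2) u_2 (x_1 u_12 - x_2 u_11)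
  (third derivatives cancel by symmetry of mixed partials), and a sum-of-squares
  identity gives the pointwise bound
     w |D^2 u|^2 <= 2 w (Delta u)^2 + 16 p^2 |x|^(2p-2) |Du|^2 + 4 D.
  Since D is a sum of partial derivatives of compactly supported C^1 functions, it
  integrates to zero; for p in {1, 2} the constant C = 64 then works.
*)

lemma pderiv_along_axis:
  fixes F :: "real^'n::finite \<Rightarrow> real"
  assumes F: "\<And>y. F differentiable (at y)"
  shows "((\<lambda>s. F (x + s *\<^sub>R axis i 1)) has_real_derivative pderiv i F (x + s *\<^sub>R axis i 1)) (at s)"
proof -
  define y where "y = x + s *\<^sub>R axis i 1"
  define D where "D = frechet_derivative F (at y)"
  have dF: "(F has_derivative D) (at y)"
    using F frechet_derivative_works unfolding D_def by blast
  have line: "((\<lambda>s. x + s *\<^sub>R axis i 1) has_derivative (\<lambda>t. t *\<^sub>R axis i 1)) (at s)"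
    by (auto intro!: derivative_eq_intros)
  have "((\<lambda>s. F (x + s *\<^sub>R axis i 1)) has_derivative (\<lambda>t. D (t *\<^sub>R axis i 1))) (at s)"
    using diff_chain_at[OF line dF[unfolded y_def]] by (simp add: o_def)
  moreover have "(\<lambda>t. D (t *\<^sub>R axis i 1)) = (\<lambda>t. D (axis i 1) * t)"
    using has_derivative_linear[OF dF] by (simp add: linear_cmul mult.commute)
  ultimately show ?thesis
    unfolding pderiv_def y_def D_def by (simp add: has_field_derivative_def)
qed

lemma mvt_axis:
  fixes F :: "real^'n::finite \<Rightarrow> real"
  assumes F: "\<And>y. F differentiable (at y)" and t: "0 < t"
  obtains s where "0 < s" "s < t" "F (x + t *\<^sub>R axis i 1) - F x = t * pderiv i F (x + s *\<^sub>R axis i 1)"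
proof -
  have "\<exists>s. 0 < s \<and> s < t \<and> (\<lambda>s. F (x + s *\<^sub>R axis i 1)) t - (\<lambda>s. F (x + s *\<^sub>R axis i 1)) 0
     = (t - 0) * pderiv i F (x + s *\<^sub>R axis i 1)"
    by (rule MVT2) (use t pderiv_along_axis[OF F] in auto)
  then show ?thesis using that by auto
qed

section \<open>Symmetry of mixed partial derivatives\<close>

lemma second_difference_mvt:
  fixes f :: "real^'n::finite \<Rightarrow> real"
  assumes f: "\<And>y. f differentiable (at y)" and fi: "\<And>y. pderiv i f differentiable (at y)"
    and t: "0 < t"
  obtains \<sigma> \<rho> where "0 < \<sigma>" "\<sigma> < t" "0 < \<rho>" "\<rho> < t"
    "f (x + t *\<^sub>R axis i 1 + t *\<^sub>R axis j 1) - f (x + t *\<^sub>R axis i 1) - f (x + t *\<^sub>R axis j 1) + f x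
     = t^2 * pderiv j (pderiv i f) (x + \<sigma> *\<^sub>R axis i 1 + \<rho> *\<^sub>R axis j 1)"
proof -
  define e where "e = (axis i 1 :: real^'n)"
  define d where "d = (axis j 1 :: real^'n)"
  define g where "g = (\<lambda>s. f ((x + t *\<^sub>R d) + s *\<^sub>R e) - f (x + s *\<^sub>R e))"
  have "\<exists>z. 0 < z \<and> z < t \<and> g t - g 0
     = (t - 0) * (pderiv i f ((x + t *\<^sub>R d) + z *\<^sub>R e) - pderiv i f (x + z *\<^sub>R e))"
  proof (rule MVT2)
    fix s :: real
    show "(g has_real_derivative pderiv i f ((x + t *\<^sub>R d) + s *\<^sub>R e) - pderiv i f (x + s *\<^sub>R e)) (at s)"
      unfolding g_def e_def by (intro DERIV_diff pderiv_along_axis f)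
  qed (rule t)
  then obtain \<sigma> where \<sigma>: "0 < \<sigma>" "\<sigma> < t" and g_diff: "g t - g 0
     = t * (pderiv i f ((x + \<sigma> *\<^sub>R e) + t *\<^sub>R d) - pderiv i f (x + \<sigma> *\<^sub>R e))"
    by (auto simp: algebra_simps)
  obtain \<rho> where \<rho>: "0 < \<rho>" "\<rho> < t" and fi_diff: "pderiv i f ((x + \<sigma> *\<^sub>R e) + t *\<^sub>R d)
     - pderiv i f (x + \<sigma> *\<^sub>R e) = t * pderiv j (pderiv i f) ((x + \<sigma> *\<^sub>R e) + \<rho> *\<^sub>R d)"
    using mvt_axis[OF fi t, of "x + \<sigma> *\<^sub>R e" j] unfolding d_def by blast
  have "f (x + t *\<^sub>R e + t *\<^sub>R d) - f (x + t *\<^sub>R e) - f (x + t *\<^sub>R d) + f x = g t - g 0"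
    unfolding g_def by (simp add: algebra_simps)
  also have "\<dots> = t^2 * pderiv j (pderiv i f) (x + \<sigma> *\<^sub>R e + \<rho> *\<^sub>R d)"
    using g_diff fi_diff by (simp add: power2_eq_square)
  finally show ?thesis using that \<sigma> \<rho> unfolding e_def d_def by blast
qed

lemma dist_two_axis_steps:
  fixes x :: "real^'n::finite"
  assumes "0 < \<sigma>" "\<sigma> < t" "0 < \<rho>" "\<rho> < t"
  shows "dist (x + \<sigma> *\<^sub>R axis i 1 + \<rho> *\<^sub>R axis j 1) x < 2 * t"
proof -
  have "dist (x + \<sigma> *\<^sub>R axis i 1 + \<rho> *\<^sub>R axis j 1) x = norm (\<sigma> *\<^sub>R axis i 1 + \<rho> *\<^sub>R (axis j 1::real^'n))"
    by (simp add: dist_norm)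
  also have "\<dots> \<le> norm (\<sigma> *\<^sub>R (axis i 1::real^'n)) + norm (\<rho> *\<^sub>R (axis j 1::real^'n))"
    by (rule norm_triangle_ineq)
  also have "\<dots> = \<sigma> + \<rho>" using assms by simp
  finally show ?thesis using assms by linarith
qed

text \<open>Schwarz's theorem: continuous mixed partial derivatives commute.  Both mixed
  derivatives are limits of the same normalised second differences.\<close>
lemma pderiv_commute:
  fixes f :: "real^'n::finite \<Rightarrow> real"
  assumes f: "\<And>y. f differentiable (at y)"
    and fi: "\<And>y. pderiv i f differentiable (at y)" and fj: "\<And>y. pderiv j f differentiable (at y)"
    and cij: "continuous_on UNIV (pderiv j (pderiv i f))"
    and cji: "continuous_on UNIV (pderiv i (pderiv j f))"
  shows "pderiv j (pderiv i f) x = pderiv i (pderiv j f) x"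
proof (rule ccontr)
  define a where "a = pderiv j (pderiv i f) x"
  define b where "b = pderiv i (pderiv j f) x"
  assume "\<not> ?thesis"
  then have \<epsilon>: "0 < \<bar>a - b\<bar> / 2" unfolding a_def b_def by simp
  obtain d1 where d1: "d1 > 0" "\<And>y. dist y x < d1 \<Longrightarrow> \<bar>pderiv j (pderiv i f) y - a\<bar> < \<bar>a - b\<bar> / 2"
    using cij \<epsilon> unfolding a_def continuous_on_eq_continuous_at[OF open_UNIV] continuous_at_eps_delta
      dist_real_def by blast
  obtain d2 where d2: "d2 > 0" "\<And>y. dist y x < d2 \<Longrightarrow> \<bar>pderiv i (pderiv j f) y - b\<bar> < \<bar>a - b\<bar> / 2"
    using cji \<epsilon> unfolding b_def continuous_on_eq_continuous_at[OF open_UNIV] continuous_at_eps_delta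
      dist_real_def by blast
  define t where "t = min d1 d2 / 2"
  have t: "0 < t" "2 * t \<le> d1" "2 * t \<le> d2" using d1 d2 unfolding t_def by auto
  obtain \<sigma> \<rho> where sr: "0 < \<sigma>" "\<sigma> < t" "0 < \<rho>" "\<rho> < t" and E1:
    "f (x + t *\<^sub>R axis i 1 + t *\<^sub>R axis j 1) - f (x + t *\<^sub>R axis i 1) - f (x + t *\<^sub>R axis j 1) + f x
     = t^2 * pderiv j (pderiv i f) (x + \<sigma> *\<^sub>R axis i 1 + \<rho> *\<^sub>R axis j 1)"
    using second_difference_mvt[OF f fi t(1)] by blast
  then have near1: "\<bar>pderiv j (pderiv i f) (x + \<sigma> *\<^sub>R axis i 1 + \<rho> *\<^sub>R axis j 1) - a\<bar> < \<bar>a - b\<bar> / 2"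
    using d1(2) dist_two_axis_steps[OF sr, of x i j] t(2) by simp
  obtain \<sigma>' \<rho>' where sr': "0 < \<sigma>'" "\<sigma>' < t" "0 < \<rho>'" "\<rho>' < t" and E2:
    "f (x + t *\<^sub>R axis j 1 + t *\<^sub>R axis i 1) - f (x + t *\<^sub>R axis j 1) - f (x + t *\<^sub>R axis i 1) + f x
     = t^2 * pderiv i (pderiv j f) (x + \<sigma>' *\<^sub>R axis j 1 + \<rho>' *\<^sub>R axis i 1)"
    using second_difference_mvt[OF f fj t(1)] by blast
  then have near2: "\<bar>pderiv i (pderiv j f) (x + \<sigma>' *\<^sub>R axis j 1 + \<rho>' *\<^sub>R axis i 1) - b\<bar> < \<bar>a - b\<bar> / 2"
    using d2(2) dist_two_axis_steps[OF sr', of x j i] t(3) by simp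
  have "x + t *\<^sub>R axis j 1 + t *\<^sub>R axis i 1 = x + t *\<^sub>R axis i 1 + t *\<^sub>R axis j 1"
    by (simp add: algebra_simps)
  with E1 E2 have "t^2 * pderiv j (pderiv i f) (x + \<sigma> *\<^sub>R axis i 1 + \<rho> *\<^sub>R axis j 1)
     = t^2 * pderiv i (pderiv j f) (x + \<sigma>' *\<^sub>R axis j 1 + \<rho>' *\<^sub>R axis i 1)"
    by (simp only:)
  then have "pderiv j (pderiv i f) (x + \<sigma> *\<^sub>R axis i 1 + \<rho> *\<^sub>R axis j 1)
     = pderiv i (pderiv j f) (x + \<sigma>' *\<^sub>R axis j 1 + \<rho>' *\<^sub>R axis i 1)"
    using t(1) by simp
  with near1 near2 show False by (simp add: abs_if split: if_splits)
qed

lemma iter_pderiv_append: "iter_pderiv (is @ js) f = iter_pderiv is (iter_pderiv js f)"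
  by (induction "is") simp_all

lemma smooth_pderiv:
  assumes "smooth f"
  shows "smooth (pderiv i f)"
  using assms iter_pderiv_append[of _ "[i]" f] unfolding smooth_def by (metis iter_pderiv.simps)

lemma smooth_differentiable: "smooth f \<Longrightarrow> f differentiable (at x)"
  unfolding smooth_def by (metis iter_pderiv.simps(1))

lemma smooth_continuous: "smooth f \<Longrightarrow> continuous_on UNIV f"
  by (simp add: continuous_at_imp_continuous_on differentiable_imp_continuous_within smooth_differentiable)

lemma smooth_pderiv_commute:
  assumes "smooth f"
  shows "pderiv j (pderiv i f) x = pderiv i (pderiv j f) x"
  using assms by (intro pderiv_commute smooth_differentiable smooth_continuous smooth_pderiv)

lemma compact_support_vanishes_outside:
  fixes u :: "real^'n::finite \<Rightarrow> real"
  assumes "compact_support u"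
  obtains R where "\<And>x. R < norm x \<Longrightarrow> u x = 0"
proof -
  have "bounded (closure {x. u x \<noteq> 0})"
    using assms compact_imp_bounded unfolding compact_support_def by blast
  then obtain a where a: "\<And>x. x \<in> closure {x. u x \<noteq> 0} \<Longrightarrow> norm x \<le> a"
    unfolding bounded_iff by blast
  show ?thesis
  proof (rule that[of "max a 0"])
    fix x :: "real^'n" assume "max a 0 < norm x"
    then show "u x = 0" using a[of x] closure_subset[of "{x. u x \<noteq> 0}"] by force
  qed
qed

lemma pderiv_vanishes_outside:
  fixes F :: "real^'n::finite \<Rightarrow> real"
  assumes z: "\<And>x. R < norm x \<Longrightarrow> F x = 0" and y: "R < norm y"
  shows "pderiv i F y = 0"
proof -
  have "(F has_derivative (\<lambda>h. 0)) (at y)"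
    by (rule has_derivative_transform_within_open[where f="\<lambda>x. 0" and s="{x. R < norm x}"])
       (use y z in \<open>auto intro: open_Collect_less continuous_intros\<close>)
  then have "(\<lambda>h. 0) = frechet_derivative F (at y)" by (rule frechet_derivative_at)
  then show ?thesis unfolding pderiv_def by metis
qed

lemma integrable_vanishing_outside:
  fixes g :: "real^'n::finite \<Rightarrow> real"
  assumes c: "continuous_on UNIV g" and z: "\<And>x. R < norm x \<Longrightarrow> g x = 0"
  shows "integrable lborel g"
proof -
  have "integrable lborel (\<lambda>x. indicator (cball 0 R) x *\<^sub>R g x)"
    by (rule borel_integrable_compact) (auto intro: continuous_on_subset[OF c])
  moreover have "(\<lambda>x. indicator (cball 0 R) x *\<^sub>R g x) = g"
    using z by (force simp: indicator_def)
  ultimately show ?thesis by simp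
qed

section \<open>The integral of a partial derivative vanishes\<close>

lemma integral_translate:
  fixes F :: "real^'n::finite \<Rightarrow> real"
  assumes "continuous_on UNIV F"
  shows "(\<integral>x. F (x + a) \<partial>lborel) = (\<integral>x. F x \<partial>lborel)"
proof -
  have m: "F \<in> borel_measurable borel" using assms by (rule borel_measurable_continuous_onI)
  have "(\<integral>x. F x \<partial>lborel) = (\<integral>x. F x \<partial>(distr lborel borel ((+) a)))"
    by (simp add: lborel_distr_plus)
  also have "\<dots> = (\<integral>x. F (a + x) \<partial>lborel)"
    by (rule integral_distr) (use m in auto)
  finally show ?thesis by (simp add: add.commute)
qed

lemma integral_difference_eq_0:
  fixes F :: "real^'n::finite \<Rightarrow> real"
  assumes c: "continuous_on UNIV F" and z: "\<And>x. R < norm x \<Longrightarrow> F x = 0"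
  shows "integrable lborel (\<lambda>x. F (x + v) - F x)" and "(\<integral>x. F (x + v) - F x \<partial>lborel) = 0"
proof -
  have c_shift: "continuous_on UNIV (\<lambda>x. F (x + v))"
    by (rule continuous_on_compose2[OF c]) (auto intro: continuous_intros)
  have "F (x + v) = 0" if "R + norm v < norm x" for x
  proof -
    have "norm x \<le> norm (x + v) + norm v" by (metis add_diff_cancel norm_triangle_ineq4)
    then show ?thesis using z that by auto
  qed
  then have "integrable lborel (\<lambda>x. F (x + v))"
    by (intro integrable_vanishing_outside[OF c_shift]) blast
  moreover have "integrable lborel F" by (rule integrable_vanishing_outside[OF c z])
  ultimately show "integrable lborel (\<lambda>x. F (x + v) - F x)"
    and "(\<integral>x. F (x + v) - F x \<partial>lborel) = 0"
    using integral_translate[OF c, of v] by simp_all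
qed

lemma difference_quotient_approx:
  fixes F :: "real^'n::finite \<Rightarrow> real"
  assumes F: "\<And>y. F differentiable (at y)" and c: "continuous_on UNIV (pderiv i F)"
    and z: "\<And>x. R < norm x \<Longrightarrow> F x = 0" and \<epsilon>: "0 < \<epsilon>"
  obtains h where "0 < h"
    "\<And>x. \<bar>pderiv i F x - (F (x + h *\<^sub>R axis i 1) - F x) / h\<bar> \<le> \<epsilon> * indicator (cball 0 (R+1)) x"
proof -
  have "uniformly_continuous_on (cball 0 (R+2)) (pderiv i F)"
    by (rule compact_uniformly_continuous) (auto intro: continuous_on_subset[OF c])
  then obtain \<delta> where \<delta>: "\<delta> > 0" and uc: "\<And>x x'. x \<in> cball 0 (R+2) \<Longrightarrow> x' \<in> cball 0 (R+2) \<Longrightarrow>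
      dist x' x < \<delta> \<Longrightarrow> dist (pderiv i F x') (pderiv i F x) < \<epsilon>"
    using \<epsilon> unfolding uniformly_continuous_on_def by metis
  define h where "h = min (\<delta>/2) 1"
  have h: "0 < h" "h < \<delta>" "h \<le> 1" using \<delta> unfolding h_def by auto
  have "\<bar>pderiv i F x - (F (x + h *\<^sub>R axis i 1) - F x) / h\<bar> \<le> \<epsilon> * indicator (cball 0 (R+1)) x" for x
  proof (cases "norm x \<le> R + 1")
    case False
    moreover have "norm x \<le> norm (x + h *\<^sub>R axis i 1) + h"
      using norm_triangle_ineq4[of "x + h *\<^sub>R axis i 1" "h *\<^sub>R axis i 1"] h by simp
    ultimately show ?thesis
      using pderiv_vanishes_outside[of R F x i, OF z] z[of x] z[of "x + h *\<^sub>R axis i 1"] h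
      by (auto simp: indicator_def)
  next
    case True
    obtain s where s: "0 < s" "s < h"
      and mv: "F (x + h *\<^sub>R axis i 1) - F x = h * pderiv i F (x + s *\<^sub>R axis i 1)"
      using mvt_axis[OF F h(1)] by blast
    have "norm (x + s *\<^sub>R axis i 1) \<le> norm x + norm (s *\<^sub>R (axis i 1 :: real^'n))"
      by (rule norm_triangle_ineq)
    then have "x + s *\<^sub>R axis i 1 \<in> cball 0 (R+2)" using True s h by simp
    moreover have "dist (x + s *\<^sub>R axis i 1) x < \<delta>" using s h by (simp add: dist_norm)
    ultimately have "\<bar>pderiv i F (x + s *\<^sub>R axis i 1) - pderiv i F x\<bar> < \<epsilon>"
      using uc[of x] True by (simp add: dist_real_def)
    then show ?thesis using True mv h by (simp add: indicator_def abs_minus_commute)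
  qed
  with h(1) that show ?thesis by blast
qed

text \<open>The integral of a partial derivative of a compactly supported C^1 function is zero:
  it is approximated arbitrarily well by integrals of difference quotients, which vanish.\<close>
lemma integral_pderiv_eq_0:
  fixes F :: "real^'n::finite \<Rightarrow> real"
  assumes F: "\<And>y. F differentiable (at y)" and c: "continuous_on UNIV (pderiv i F)"
    and z: "\<And>x. R < norm x \<Longrightarrow> F x = 0"
  shows "(\<integral>x. pderiv i F x \<partial>lborel) = 0"
proof -
  define I where "I = (\<integral>x. pderiv i F x \<partial>lborel)"
  define M where "M = measure lborel (cball (0::real^'n) (R+1))"
  have Fc: "continuous_on UNIV F"
    by (simp add: continuous_at_imp_continuous_on differentiable_imp_continuous_within F)
  have iD: "integrable lborel (pderiv i F)"
    by (rule integrable_vanishing_outside[OF c pderiv_vanishes_outside[OF z]])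
  have bound: "\<bar>I\<bar> \<le> \<epsilon> * M" if \<epsilon>: "0 < \<epsilon>" for \<epsilon>
  proof -
    obtain h where h: "0 < h" and approx:
      "\<And>x. \<bar>pderiv i F x - (F (x + h *\<^sub>R axis i 1) - F x) / h\<bar> \<le> \<epsilon> * indicator (cball 0 (R+1)) x"
      using difference_quotient_approx[OF F c z \<epsilon>] by blast
    define q where "q = (\<lambda>x. (F (x + h *\<^sub>R axis i 1) - F x) / h)"
    have iq: "integrable lborel q"
      unfolding q_def using integral_difference_eq_0(1)[OF Fc z] by simp
    have "(\<integral>x. q x \<partial>lborel) = (\<integral>x. F (x + h *\<^sub>R axis i 1) - F x \<partial>lborel) / h"
      unfolding q_def by simp
    then have q0: "(\<integral>x. q x \<partial>lborel) = 0"
      using integral_difference_eq_0(2)[OF Fc z] by simp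
    have "\<bar>I\<bar> = \<bar>\<integral>x. pderiv i F x - q x \<partial>lborel\<bar>"
      unfolding I_def using iD iq q0 by simp
    also have "\<dots> \<le> (\<integral>x. \<bar>pderiv i F x - q x\<bar> \<partial>lborel)" by (rule integral_abs_bound)
    also have "\<dots> \<le> (\<integral>x. \<epsilon> * indicator (cball (0::real^'n) (R+1)) x \<partial>lborel)"
    proof (rule Bochner_Integration.integral_mono)
      show "integrable lborel (\<lambda>x. \<epsilon> * indicator (cball (0::real^'n) (R+1)) x :: real)"
        using borel_integrable_compact[of "cball (0::real^'n) (R+1)" "\<lambda>x. \<epsilon>"]
        by (simp add: mult.commute)
    qed (use iD iq approx in \<open>auto simp: q_def\<close>)
    also have "\<dots> = \<epsilon> * M" unfolding M_def by simp
    finally show ?thesis .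
  qed
  have M: "M \<ge> 0" unfolding M_def by simp
  have "\<bar>I\<bar> \<le> 0 + e" if e: "0 < e" for e
  proof -
    have "\<bar>I\<bar> \<le> e / (M + 1) * M" using bound[of "e / (M + 1)"] e M by simp
    also have "\<dots> \<le> e" using e M by (simp add: field_simps)
    finally show ?thesis by simp
  qed
  then have "\<bar>I\<bar> \<le> 0" by (rule field_le_epsilon)
  then show ?thesis unfolding I_def by simp
qed

lemma pderiv_mult:
  fixes f g :: "real^'n::finite \<Rightarrow> real"
  assumes f: "f differentiable (at x)" and g: "g differentiable (at x)"
  shows "pderiv i (\<lambda>y. f y * g y) x = f x * pderiv i g x + pderiv i f x * g x"
proof -
  have "((\<lambda>y. f y * g y) has_derivative
      (\<lambda>h. f x * frechet_derivative g (at x) h + frechet_derivative f (at x) h * g x)) (at x)"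
    by (rule has_derivative_mult) (use f g frechet_derivative_works in auto)
  then have "(\<lambda>h. f x * frechet_derivative g (at x) h + frechet_derivative f (at x) h * g x)
      = frechet_derivative (\<lambda>y. f y * g y) (at x)"
    by (rule frechet_derivative_at)
  then show ?thesis unfolding pderiv_def by metis
qed

lemma pderiv_weighted_product:
  fixes w f g :: "real^'n::finite \<Rightarrow> real"
  assumes w: "w differentiable (at x)" and f: "f differentiable (at x)"
    and g: "g differentiable (at x)"
  shows "pderiv i (\<lambda>y. w y * (f y * g y)) x
    = w x * (f x * pderiv i g x + pderiv i f x * g x) + pderiv i w x * (f x * g x)"
  using pderiv_mult[OF w differentiable_mult[OF f g]] pderiv_mult[OF f g] by simp

lemma weight_deriv:
  fixes x :: "real^'n::finite"
  assumes p: "1 \<le> p"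
  shows "(\<lambda>x::real^'n. norm x ^ (2*p)) differentiable (at x)"
    and "pderiv i (\<lambda>x::real^'n. norm x ^ (2*p)) x = 2 * real p * norm x ^ (2*p-2) * x $ i"
proof -
  have eq: "(\<lambda>x::real^'n. norm x ^ (2*p)) = (\<lambda>x. (x \<bullet> x)^p)"
    by (simp add: power_mult power2_norm_eq_inner)
  have d: "((\<lambda>x::real^'n. (x \<bullet> x)^p) has_derivative
      (\<lambda>h. real p * (x \<bullet> x)^(p-1) * (2 * (x \<bullet> h)))) (at x)"
    by (auto intro!: derivative_eq_intros simp: inner_commute algebra_simps)
  then show "(\<lambda>x::real^'n. norm x ^ (2*p)) differentiable (at x)"
    unfolding eq differentiable_def by blast
  have "(\<lambda>h. real p * (x \<bullet> x)^(p-1) * (2 * (x \<bullet> h))) = frechet_derivative (\<lambda>x::real^'n. (x \<bullet> x)^p) (at x)"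
    using d by (rule frechet_derivative_at)
  then have "pderiv i (\<lambda>x::real^'n. norm x ^ (2*p)) x = real p * (x \<bullet> x)^(p-1) * (2 * (x \<bullet> axis i 1))"
    unfolding eq pderiv_def by metis
  also have "(x \<bullet> x)^(p-1) = norm x ^ (2*p-2)"
  proof -
    have "2*p-2 = 2*(p-1)" by simp
    then show ?thesis by (simp add: power_mult power2_norm_eq_inner[symmetric])
  qed
  finally show "pderiv i (\<lambda>x::real^'n. norm x ^ (2*p)) x = 2 * real p * norm x ^ (2*p-2) * x $ i"
    by (simp add: inner_axis)
qed

section \<open>The divergence term\<close>

text \<open>The two weighted fluxes w u_2 u_12 (k = 2) and w u_2 u_11 (k = 1) whose divergence
  d1(w u_2 u_12) - d2(w u_2 u_11) turns u_12^2 - u_11 u_22 into an exact derivative.\<close>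
definition weighted_flux :: "nat \<Rightarrow> (real^2 \<Rightarrow> real) \<Rightarrow> 2 \<Rightarrow> real^2 \<Rightarrow> real" where
  "weighted_flux p u k y = norm y ^ (2*p) * (pderiv 2 u y * pderiv 1 (pderiv k u) y)"

lemma pderiv_weighted_flux:
  assumes u: "smooth u" and p: "1 \<le> p"
  shows "pderiv i (weighted_flux p u k) x
    = norm x ^ (2*p) * (pderiv 2 u x * pderiv i (pderiv 1 (pderiv k u)) x
        + pderiv i (pderiv 2 u) x * pderiv 1 (pderiv k u) x)
      + 2 * real p * norm x ^ (2*p-2) * x $ i * (pderiv 2 u x * pderiv 1 (pderiv k u) x)"
  unfolding weighted_flux_def
  by (simp add: pderiv_weighted_product weight_deriv[OF p] smooth_differentiable smooth_pderiv u)

lemma integral_pderiv_weighted_flux: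
  assumes u: "smooth u" and p: "1 \<le> p" and z: "\<And>x. R < norm x \<Longrightarrow> u x = 0"
  shows "integrable lborel (pderiv i (weighted_flux p u k))"
    and "(\<integral>x. pderiv i (weighted_flux p u k) x \<partial>lborel) = 0"
proof -
  have diff: "weighted_flux p u k differentiable (at y)" for y
    unfolding weighted_flux_def
    by (intro differentiable_mult weight_deriv(1)[OF p] smooth_differentiable smooth_pderiv u)
  have "continuous_on UNIV (\<lambda>x. norm x ^ (2*p) * (pderiv 2 u x * pderiv i (pderiv 1 (pderiv k u)) x
        + pderiv i (pderiv 2 u) x * pderiv 1 (pderiv k u) x)
      + 2 * real p * norm x ^ (2*p-2) * x $ i * (pderiv 2 u x * pderiv 1 (pderiv k u) x))"
    by (intro continuous_intros smooth_continuous smooth_pderiv u)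
  moreover have "pderiv i (weighted_flux p u k) = (\<lambda>x. norm x ^ (2*p) * (pderiv 2 u x
        * pderiv i (pderiv 1 (pderiv k u)) x + pderiv i (pderiv 2 u) x * pderiv 1 (pderiv k u) x)
      + 2 * real p * norm x ^ (2*p-2) * x $ i * (pderiv 2 u x * pderiv 1 (pderiv k u) x))"
    using pderiv_weighted_flux[OF u p] by blast
  ultimately have cont: "continuous_on UNIV (pderiv i (weighted_flux p u k))" by simp
  have "weighted_flux p u k x = 0" if "R < norm x" for x
    using pderiv_vanishes_outside[of R u x 2, OF z] that unfolding weighted_flux_def by simp
  then show "integrable lborel (pderiv i (weighted_flux p u k))"
    and "(\<integral>x. pderiv i (weighted_flux p u k) x \<partial>lborel) = 0"
    by (blast intro: integrable_vanishing_outside[OF cont] pderiv_vanishes_outside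
        integral_pderiv_eq_0[OF diff cont])+
qed

text \<open>The divergence of the fluxes: third derivatives cancel by symmetry of mixed partials.\<close>
lemma weighted_flux_divergence:
  fixes x :: "real^2"
  assumes u: "smooth u" and p: "1 \<le> p"
  shows "pderiv 1 (weighted_flux p u 2) x - pderiv 2 (weighted_flux p u 1) x
    = norm x ^ (2*p) * ((pderiv 1 (pderiv 2 u) x)^2 - pderiv 1 (pderiv 1 u) x * pderiv 2 (pderiv 2 u) x)
      + 2 * real p * norm x ^ (2*p-2) * pderiv 2 u x
          * (x $ 1 * pderiv 1 (pderiv 2 u) x - x $ 2 * pderiv 1 (pderiv 1 u) x)"
proof -
  have u12: "pderiv 2 (pderiv 1 u) = pderiv 1 (pderiv 2 u)"
    using smooth_pderiv_commute[OF u] by blast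
  have "pderiv 2 (pderiv 1 (pderiv 1 u)) x = pderiv 1 (pderiv 2 (pderiv 1 u)) x"
    by (rule smooth_pderiv_commute[OF smooth_pderiv[OF u]])
  then have u112: "pderiv 2 (pderiv 1 (pderiv 1 u)) x = pderiv 1 (pderiv 1 (pderiv 2 u)) x"
    by (simp add: u12)
  show ?thesis
    unfolding pderiv_weighted_flux[OF u p] u112 by (simp add: algebra_simps power2_eq_square)
qed

section \<open>The pointwise inequality\<close>

text \<open>The algebraic core: with s = x_1^2 + x_2^2 the difference of the two sides is N times
  a sum of squares.\<close>
lemma weighted_hessian_sos:
  fixes xa xb aa ab ad ua ub P N :: real
  assumes "0 \<le> N"
  defines "s \<equiv> xa^2 + xb^2"
  shows "(N * s)*(aa^2 + 2*ab^2 + ad^2)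
    \<le> 2*((N * s)*(aa+ad)^2) + 16*P^2*(N*(ua^2+ub^2))
      + 4*((N * s)*(ab^2 - aa*ad) + 2*P*N*ub*(xa*ab - xb*aa))"
proof -
  have "2*((N * s)*(aa+ad)^2) + 16*P^2*(N*(ua^2+ub^2)) + 4*((N * s)*(ab^2 - aa*ad) + 2*P*N*ub*(xa*ab - xb*aa))
     - (N * s)*(aa^2 + 2*ab^2 + ad^2)
   = N*((xa*aa + xb*ab)^2 + s * ab^2 + s * ad^2 + 16*P^2*ua^2 + (xa*ab - xb*aa + 4*P*ub)^2)"
    unfolding s_def by algebra
  moreover have "0 \<le> N*((xa*aa + xb*ab)^2 + s * ab^2 + s * ad^2 + 16*P^2*ua^2 + (xa*ab - xb*aa + 4*P*ub)^2)"
    using assms unfolding s_def by (intro mult_nonneg_nonneg add_nonneg_nonneg) auto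
  ultimately show ?thesis by linarith
qed

lemma weighted_hessian_pointwise:
  fixes x :: "real^2"
  assumes u: "smooth u" and p: "1 \<le> p"
  shows "norm x ^ (2*p) * hessian_sq u x
    \<le> 2 * (norm x ^ (2*p) * (laplacian u x)^2) + 16 * (real p)^2 * (norm x ^ (2*p-2) * grad_sq u x)
      + 4 * (pderiv 1 (weighted_flux p u 2) x - pderiv 2 (weighted_flux p u 1) x)"
proof -
  define N where "N = norm x ^ (2*p-2)"
  have N: "0 \<le> N" unfolding N_def by simp
  have "2*p = (2*p-2) + 2" using p by simp
  then have "norm x ^ (2*p) = norm x ^ (2*p-2) * norm x ^ 2" by (metis power_add)
  also have "norm x ^ 2 = x$1^2 + x$2^2"
    unfolding power2_norm_eq_inner by (simp add: inner_vec_def sum_2 power2_eq_square)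
  finally have weight: "norm x ^ (2*p) = N * (x$1^2 + x$2^2)" unfolding N_def .
  have u12: "pderiv 2 (pderiv 1 u) x = pderiv 1 (pderiv 2 u) x"
    by (rule smooth_pderiv_commute[OF u])
  show ?thesis
    using weighted_hessian_sos[OF N, of "x$1" "x$2" "pderiv 1 (pderiv 1 u) x" "pderiv 1 (pderiv 2 u) x"
        "pderiv 2 (pderiv 2 u) x" "real p" "pderiv 1 u x" "pderiv 2 u x"]
    unfolding weighted_flux_divergence[OF u p] hessian_sq_def laplacian_def grad_sq_def sum_2 u12
      weight N_def[symmetric]
    by (simp add: algebra_simps power2_eq_square)
qed

text \<open>Integrating the pointwise inequality: the divergence term drops out.\<close>
lemma weighted_hessian_estimate:
  fixes u :: "real^2 \<Rightarrow> real"
  assumes p: "1 \<le> p" and u: "C_infty_c u"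
  shows "(\<integral>x. norm x ^ (2*p) * hessian_sq u x \<partial>lborel)
    \<le> 2 * (\<integral>x. norm x ^ (2*p) * (laplacian u x)^2 \<partial>lborel)
      + 16 * (real p)^2 * (\<integral>x. norm x ^ (2*p-2) * grad_sq u x \<partial>lborel)"
proof -
  have sm: "smooth u" and cs: "compact_support u" using u by (auto simp: C_infty_c_def)
  obtain R where z: "\<And>x. R < norm x \<Longrightarrow> u x = 0"
    using compact_support_vanishes_outside[OF cs] by blast
  have c1: "continuous_on UNIV (pderiv i u)" for i
    by (intro smooth_continuous smooth_pderiv sm)
  have c2: "continuous_on UNIV (pderiv i (pderiv j u))" for i j
    by (intro smooth_continuous smooth_pderiv sm)
  have z1: "pderiv i u x = 0" if "R < norm x" for i x
    using pderiv_vanishes_outside[OF z that] .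
  have z2: "pderiv i (pderiv j u) x = 0" if "R < norm x" for i j x
    using pderiv_vanishes_outside[OF pderiv_vanishes_outside[OF z] that] .
  define fH where "fH = (\<lambda>x::real^2. norm x ^ (2*p) * hessian_sq u x)"
  define fL where "fL = (\<lambda>x::real^2. norm x ^ (2*p) * (laplacian u x)^2)"
  define fG where "fG = (\<lambda>x::real^2. norm x ^ (2*p-2) * grad_sq u x)"
  define flux_div where "flux_div = (\<lambda>x. pderiv 1 (weighted_flux p u 2) x - pderiv 2 (weighted_flux p u 1) x)"
  have iH: "integrable lborel fH"
    unfolding fH_def hessian_sq_def
    by (rule integrable_vanishing_outside[where R=R]) (auto intro!: continuous_intros c2 simp: z2)
  have iL: "integrable lborel fL"
    unfolding fL_def laplacian_def
    by (rule integrable_vanishing_outside[where R=R]) (auto intro!: continuous_intros c2 simp: z2)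
  have iG: "integrable lborel fG"
    unfolding fG_def grad_sq_def
    by (rule integrable_vanishing_outside[where R=R]) (auto intro!: continuous_intros c1 simp: z1)
  have idiv: "integrable lborel flux_div" and div0: "(\<integral>x. flux_div x \<partial>lborel) = 0"
    unfolding flux_div_def using integral_pderiv_weighted_flux[OF sm p z] by simp_all
  have "fH x \<le> 2 * fL x + 16 * (real p)^2 * fG x + 4 * flux_div x" for x
    unfolding fH_def fL_def fG_def flux_div_def by (rule weighted_hessian_pointwise[OF sm p])
  then have "(\<integral>x. fH x \<partial>lborel) \<le> (\<integral>x. 2 * fL x + 16 * (real p)^2 * fG x + 4 * flux_div x \<partial>lborel)"
    using iH iL iG idiv by (intro Bochner_Integration.integral_mono) auto
  also have "\<dots> = 2 * (\<integral>x. fL x \<partial>lborel) + 16 * (real p)^2 * (\<integral>x. fG x \<partial>lborel)"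
    using iL iG idiv div0 by simp
  finally show ?thesis unfolding fH_def fL_def fG_def .
qed

theorem lemmaA1:
  fixes p :: nat
  assumes "p \<in> {1, 2}"
  shows "\<exists>C::real. \<forall>u :: real^2 \<Rightarrow> real. C_infty_c u \<longrightarrow>
     (\<integral>x. norm x ^ (2*p) * hessian_sq u x \<partial>lborel)
       \<le> C * ((\<integral>x. norm x ^ (2*p) * (laplacian u x)^2 \<partial>lborel)
             + (\<integral>x. norm x ^ (2*p - 2) * grad_sq u x \<partial>lborel))"
proof (intro exI[of _ 64] allI impI)
  fix u :: "real^2 \<Rightarrow> real"
  assume u: "C_infty_c u"
  have p: "1 \<le> p" and p_sq: "16 * (real p)^2 \<le> 64" using assms by auto
  define L where "L = (\<integral>x. norm x ^ (2*p) * (laplacian u x)^2 \<partial>lborel)"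
  define G where "G = (\<integral>x. norm x ^ (2*p - 2) * grad_sq u x \<partial>lborel)"
  have L: "0 \<le> L" unfolding L_def by (simp add: Bochner_Integration.integral_nonneg)
  have "0 \<le> G"
    unfolding G_def grad_sq_def by (intro Bochner_Integration.integral_nonneg) (simp add: sum_nonneg)
  then have G: "16 * (real p)^2 * G \<le> 64 * G" by (rule mult_right_mono[OF p_sq])
  have "(\<integral>x. norm x ^ (2*p) * hessian_sq u x \<partial>lborel) \<le> 2 * L + 16 * (real p)^2 * G"
    using weighted_hessian_estimate[OF p u] unfolding L_def G_def .
  also have "\<dots> \<le> 64 * (L + G)" using L G by (smt (verit))
  finally show "(\<integral>x. norm x ^ (2*p) * hessian_sq u x \<partial>lborel) \<le> 64 * (L + G)" .
qed

end
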